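(* Let $b=3$, $c>0$ and $k\in\left(0,\frac{c}{4}\right)$. Let $\phi=\phi_k\in C^\infty(\mathbb{R})$ be the solitary wave profile of $$u_t-u_{txx}+4uu_x=3u_xu_{xx}+uu_{xxx},$$ that is, the travelling wave $u(t,x)=\phi(x-ct)$ with $\phi'(0)=0$, $\phi(x)\to k$ as $|x|\to\infty$ and $0<\phi<c$. Then the mapping $$k\mapsto Q(\phi)=\int_{\mathbb{R}}\left[3\frac{c-k}{c-\phi}-\left(\frac{c-k}{c-\phi}\right)^3-2\right]dx$$ is strictly increasing on $\left(0,\frac{c}{4}\right)$. *)

theory Defs
  imports "HOL-Analysis.Analysis"
begin

definition smooth_real :: "(real \<Rightarrow> real) \<Rightarrow> bool" where
  "smooth_real f \<longleftrightarrow> (\<forall>n. \<forall>x. ((deriv ^^ n) f) differentiable (at x))"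

text \<open>Travelling-wave ODE obtained from u_t - u_txx + 4 u u_x = 3 u_x u_xx + u u_xxx
  (the case b = 3) with u(t,x) = phi(x - c t).\<close>
definition tw_ode :: "real \<Rightarrow> (real \<Rightarrow> real) \<Rightarrow> bool" where
  "tw_ode c phi \<longleftrightarrow> (\<forall>x.
     - c * deriv phi x + c * (deriv ^^ 3) phi x + 4 * phi x * deriv phi x
       = 3 * deriv phi x * (deriv ^^ 2) phi x + phi x * (deriv ^^ 3) phi x)"

definition solitary_profile :: "real \<Rightarrow> real \<Rightarrow> (real \<Rightarrow> real) \<Rightarrow> bool" where
  "solitary_profile c k phi \<longleftrightarrow>
     smooth_real phi \<and> tw_ode c phi \<and> deriv phi 0 = 0 \<and>
     (phi \<longlongrightarrow> k) at_top \<and> (phi \<longlongrightarrow> k) at_bot \<and>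
     (\<forall>x. 0 < phi x \<and> phi x < c) \<and> \<not> (\<forall>x. phi x = k)"

definition Qfun :: "real \<Rightarrow> real \<Rightarrow> (real \<Rightarrow> real) \<Rightarrow> real" where
  "Qfun c k phi = (LINT x|lborel. 3 * ((c - k) / (c - phi x)) - ((c - k) / (c - phi x)) ^ 3 - 2)"

end

theory Submission
  imports Defs
begin

text \<open>Two first integrals of the travelling-wave equation turn it into the phase-plane relation
  (c - phi)^2 phi'^2 = (phi - k)^2 q(phi), with q(u) = (u-k)^2 - 2(c-2k)(u-k) + (c-k)(c-4k),
  whose smaller root c - k - sqrt(c k) is the crest of the wave. A Gronwall argument gives
  phi > k, so phi' vanishes only at the crest: phi increases up to its unique maximum point M
  and decreases after it. On each of the two monotone halves the integrand of Q is, up to sign,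
  the x-derivative of F(phi) for an explicit function F, hence Q(phi) = 2 (F(crest) - F(k))
  depends on k only; it equals
  4 ln(sqrt((c-k)(c-4k)) + c - 2k) - 2 ln c - 2 ln k - 2 sqrt((c-k)(c-4k)) / k,
  whose derivative (c-4k)(2c+k) / (k^2 sqrt((c-k)(c-4k))) is positive on (0, c/4).\<close>

section \<open>Calculus on the real line\<close>

lemma abs_deriv_limit_zero_at_top:
  fixes f g :: "real \<Rightarrow> real"
  assumes f: "(f \<longlongrightarrow> l) at_top" and f': "\<And>x. (f has_real_derivative g x) (at x)"
    and g: "((\<lambda>x. \<bar>g x\<bar>) \<longlongrightarrow> m) at_top"
  shows "m = 0"
proof (rule ccontr)
  assume "m \<noteq> 0"
  moreover have "m \<ge> 0" by (rule tendsto_lowerbound[OF g]) auto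
  ultimately have m: "m > 0" by simp
  have "eventually (\<lambda>x. m/2 < \<bar>g x\<bar> \<and> dist (f x) l < m/4) at_top"
    using order_tendstoD(1)[OF g, of "m/2"] tendstoD[OF f, of "m/4"] m
    by (auto intro: eventually_conj)
  then obtain X where X: "\<And>x. x \<ge> X \<Longrightarrow> m/2 < \<bar>g x\<bar> \<and> dist (f x) l < m/4"
    unfolding eventually_at_top_linorder by blast
  obtain z where z: "X < z" "f (X+1) - f X = g z"
    using MVT2[of X "X+1" f g] f' by auto
  have "\<bar>f (X+1) - f X\<bar> \<le> dist (f (X+1)) l + dist (f X) l"
    by (simp add: dist_real_def)
  also have "\<dots> < m/2" using X[of X] X[of "X+1"] by simp
  finally show False using X[of z] z by simp
qed

lemma attains_max_if_above_limits:
  fixes f :: "real \<Rightarrow> real"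
  assumes "\<And>x. isCont f x" "(f \<longlongrightarrow> l) at_top" "(f \<longlongrightarrow> l) at_bot" "f x0 > l"
  shows "\<exists>M. \<forall>x. f x \<le> f M"
proof -
  obtain X1 where X1: "\<And>x. x \<ge> X1 \<Longrightarrow> f x < f x0"
    using order_tendstoD(2)[OF assms(2,4)] unfolding eventually_at_top_linorder by blast
  obtain X2 where X2: "\<And>x. x \<le> X2 \<Longrightarrow> f x < f x0"
    using order_tendstoD(2)[OF assms(3,4)] unfolding eventually_at_bot_linorder by blast
  define S where "S = {min X2 x0 .. max X1 x0}"
  have x0: "x0 \<in> S" unfolding S_def by simp
  have "compact S" "continuous_on S f"
    unfolding S_def using assms(1) by (auto intro: continuous_at_imp_continuous_on)
  then obtain M where "\<And>y. y \<in> S \<Longrightarrow> f y \<le> f M"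
    using continuous_attains_sup[of S f] x0 by blast
  moreover have "f x < f x0" if "x \<notin> S" for x
    using that X1 X2 unfolding S_def by force
  ultimately have "f x \<le> f M" for x
    using x0 by (cases "x \<in> S") force+
  then show ?thesis by blast
qed

lemma attains_min_if_below_limits:
  fixes f :: "real \<Rightarrow> real"
  assumes "\<And>x. isCont f x" "(f \<longlongrightarrow> l) at_top" "(f \<longlongrightarrow> l) at_bot" "f x0 < l"
  shows "\<exists>M. \<forall>x. f M \<le> f x"
  using attains_max_if_above_limits[of "\<lambda>x. - f x" "- l" x0] assms
  by (auto intro: tendsto_minus)

text \<open>An interior minimum of f on [M, x] would be a critical point, hence a maximum point.\<close>
lemma deriv_neg_right_of_max:
  fixes f f' f'' :: "real \<Rightarrow> real"
  assumes f': "\<And>x. (f has_real_derivative f' x) (at x)"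
    and f'': "\<And>x. (f' has_real_derivative f'' x) (at x)"
    and max: "\<And>x. f x \<le> f M" and crit: "\<And>x. f' x = 0 \<Longrightarrow> f x = f M"
    and "f'' M < 0" and "x > M"
  shows "f' x < 0 \<and> f x < f M"
proof -
  have "f' M = 0" using DERIV_local_max[OF f' zero_less_one] max by blast
  then obtain d where d: "d > 0" "\<And>h. 0 < h \<Longrightarrow> h < d \<Longrightarrow> f' (M + h) < 0"
    using DERIV_neg_dec_right[OF f'' \<open>f'' M < 0\<close>] by auto
  have near: "f' p < 0 \<and> f p < f M" if p: "M < p" "p < M + d" for p
  proof
    show "f' p < 0" using d(2)[of "p - M"] p by simp
    obtain z where "M < z" "z < p" "f p - f M = (p - M) * f' z"
      using MVT2[of M p f f'] f' p by auto
    moreover have "f' z < 0" using d(2)[of "z - M"] calculation p by simp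
    ultimately show "f p < f M" using p mult_pos_neg[of "p - M" "f' z"] by simp
  qed
  have cont: "continuous_on S f" "continuous_on S f'" for S
    using f' f'' by (meson DERIV_isCont continuous_at_imp_continuous_on)+
  have below: "f y < f M" if "y > M" for y
  proof (rule ccontr)
    assume "\<not> f y < f M"
    then have fy: "f y = f M" using max[of y] by simp
    obtain p where p: "M < p" "p < M + d" "p < y"
      using dense[of M "min (M + d) y"] d(1) \<open>y > M\<close> by auto
    obtain z where z: "z \<in> {M..y}" "\<And>t. t \<in> {M..y} \<Longrightarrow> f z \<le> f t"
      using continuous_attains_inf[OF compact_Icc _ cont(1), of M y] \<open>y > M\<close> by auto
    have "f z \<le> f p" using z(2)[of p] p by simp
    also have "\<dots> < f M" using near p by blast
    finally have fz: "f z < f M" .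
    then have "M < z" "z < y" using z(1) fy by (auto simp: order_le_less)
    then have "f' z = 0"
      using z(2) by (intro DERIV_local_min[OF f', where d="min (z - M) (y - z)"]) (auto simp: abs_if)
    then show False using crit fz by simp
  qed
  have "f' x < 0"
  proof (rule ccontr)
    assume "\<not> f' x < 0"
    obtain p where p: "M < p" "p < M + d" "p < x"
      using dense[of M "min (M + d) x"] d(1) \<open>x > M\<close> by auto
    then obtain z where "p \<le> z" "f' z = 0"
      using IVT'[of f' p 0 x] near[of p] \<open>\<not> f' x < 0\<close> cont(2) by fastforce
    then show False using crit below[of z] p by simp
  qed
  then show ?thesis using below \<open>x > M\<close> by blast
qed

lemma vanishes_if_abs_deriv_le:
  fixes \<psi> \<psi>' :: "real \<Rightarrow> real"
  assumes \<psi>': "\<And>x. (\<psi> has_real_derivative \<psi>' x) (at x)"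
    and bound: "\<And>x. \<bar>\<psi>' x\<bar> \<le> K * \<psi> x" and "\<And>x. \<psi> x \<ge> 0" and "\<psi> a = 0"
  shows "\<psi> x = 0"
proof (cases "a \<le> x")
  case True
  have "\<psi> x * exp (- K * x) \<le> \<psi> a * exp (- K * a)"
  proof (rule DERIV_nonpos_imp_nonincreasing[OF True])
    fix t
    have "\<psi>' t * exp (- K * t) \<le> K * \<psi> t * exp (- K * t)"
      using bound[of t] by (intro mult_right_mono) auto
    then show "\<exists>y. ((\<lambda>x. \<psi> x * exp (- K * x)) has_real_derivative y) (at t) \<and> y \<le> 0"
      by (auto intro!: derivative_eq_intros \<psi>' simp: algebra_simps)
  qed
  then show ?thesis using assms(3)[of x] assms(4) by (simp add: mult_le_0_iff)
next
  case False
  have "\<psi> x * exp (K * x) \<le> \<psi> a * exp (K * a)"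
  proof (rule DERIV_nonneg_imp_nondecreasing[of x a])
    show "x \<le> a" using False by simp
  next
    fix t
    have "- (K * \<psi> t) * exp (K * t) \<le> \<psi>' t * exp (K * t)"
      using bound[of t] by (intro mult_right_mono) auto
    then show "\<exists>y. ((\<lambda>x. \<psi> x * exp (K * x)) has_real_derivative y) (at t) \<and> y \<ge> 0"
      by (auto intro!: derivative_eq_intros \<psi>' simp: algebra_simps)
  qed
  then show ?thesis using assms(3)[of x] assms(4) by (simp add: mult_le_0_iff)
qed

lemma integral_Ioi_FTC_nonneg:
  fixes f F :: "real \<Rightarrow> real"
  assumes F': "\<And>x. x > a \<Longrightarrow> (F has_real_derivative f x) (at x)"
    and f: "\<And>x. x > a \<Longrightarrow> isCont f x" "\<And>x. x > a \<Longrightarrow> f x \<ge> 0"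
    and "isCont F a" and "(F \<longlongrightarrow> B) at_top"
  shows "set_integrable lborel {a<..} f" "(LINT x:{a<..}|lborel. f x) = B - F a"
proof -
  have "((F \<circ> real_of_ereal) \<longlongrightarrow> F a) (at_right (ereal a))"
    using \<open>isCont F a\<close> by (simp add: ereal_tendsto_simps isCont_def filterlim_at_split)
  moreover have "((F \<circ> real_of_ereal) \<longlongrightarrow> B) (at_left \<infinity>)"
    using \<open>(F \<longlongrightarrow> B) at_top\<close> by (simp add: ereal_tendsto_simps)
  ultimately show "set_integrable lborel {a<..} f" "(LINT x:{a<..}|lborel. f x) = B - F a"
    using interval_integral_FTC_nonneg[of "ereal a" \<infinity> F f] F' f
    by (auto simp: interval_integral_to_infinity_eq)
qed

lemma integral_Iio_FTC_nonneg:
  fixes f F :: "real \<Rightarrow> real"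
  assumes F': "\<And>x. x < a \<Longrightarrow> (F has_real_derivative f x) (at x)"
    and f: "\<And>x. x < a \<Longrightarrow> isCont f x" "\<And>x. x < a \<Longrightarrow> f x \<ge> 0"
    and "isCont F a" and "(F \<longlongrightarrow> A) at_bot"
  shows "set_integrable lborel {..<a} f" "(LINT x:{..<a}|lborel. f x) = F a - A"
proof -
  have "((F \<circ> real_of_ereal) \<longlongrightarrow> F a) (at_left (ereal a))"
    using \<open>isCont F a\<close> by (simp add: ereal_tendsto_simps isCont_def filterlim_at_split)
  moreover have "((F \<circ> real_of_ereal) \<longlongrightarrow> A) (at_right (-\<infinity>))"
    using \<open>(F \<longlongrightarrow> A) at_bot\<close> by (simp add: ereal_tendsto_simps)
  ultimately show "set_integrable lborel {..<a} f" "(LINT x:{..<a}|lborel. f x) = F a - A"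
    using interval_integral_FTC_nonneg[of "-\<infinity>" "ereal a" F f] F' f
    by (auto simp: interval_lebesgue_integral_def)
qed

lemma integral_lborel_split:
  fixes f :: "real \<Rightarrow> real"
  assumes "f \<in> borel_measurable borel"
    and "set_integrable lborel {..<a} f" "set_integrable lborel {a<..} f"
  shows "(LINT x|lborel. f x) = (LINT x:{..<a}|lborel. f x) + (LINT x:{a<..}|lborel. f x)"
proof -
  have "(LINT x|lborel. f x) = (LINT x:{..<a} \<union> {a<..}|lborel. f x)"
    unfolding set_lebesgue_integral_def
  proof (rule integral_cong_AE)
    show "AE x in lborel. f x = indicator ({..<a} \<union> {a<..}) x *\<^sub>R f x"
      using AE_lborel_singleton[of a] by eventually_elim (auto split: split_indicator)
  qed (use assms in \<open>auto simp: set_integrable_def\<close>)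
  also have "\<dots> = (LINT x:{..<a}|lborel. f x) + (LINT x:{a<..}|lborel. f x)"
    using assms by (intro set_integral_Un) auto
  finally show ?thesis .
qed

section \<open>The phase-plane quadratic and the crest\<close>

definition wave_quad :: "real \<Rightarrow> real \<Rightarrow> real \<Rightarrow> real" where
  "wave_quad c k u = (u-k)^2 - 2*(c-2*k)*(u-k) + (c-k)*(c-4*k)"

definition crest :: "real \<Rightarrow> real \<Rightarrow> real" where
  "crest c k = c - k - sqrt (c*k)"

lemma wave_quad_factor:
  assumes "c * k \<ge> 0"
  shows "wave_quad c k u = (u - crest c k) * (u - (c - k + sqrt (c*k)))"
proof -
  have "sqrt (c*k) ^ 2 = c * k" using assms by simp
  then show ?thesis unfolding wave_quad_def crest_def by algebra
qed

lemma less_sqrt_mult: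
  fixes c k :: real
  assumes "0 < k" "k < c"
  shows "k < sqrt (c*k)"
  using assms real_sqrt_less_mono[of "k*k" "c*k"] by simp

lemma crest_gt:
  assumes "0 < k" "k < c/4"
  shows "k < crest c k"
proof -
  have "(c - 2*k)^2 - c*k = (c-k)*(c-4*k)" by algebra
  moreover have "(c-k)*(c-4*k) > 0" using assms by (intro mult_pos_pos) auto
  ultimately have "sqrt (c*k) < sqrt ((c - 2*k)^2)" by (intro real_sqrt_less_mono) linarith
  then have "sqrt (c*k) < c - 2*k" using assms by simp
  then show ?thesis unfolding crest_def by simp
qed

lemma crest_lt:
  assumes "0 < k" "k < c/4"
  shows "crest c k < c"
  using assms less_sqrt_mult[of k c] unfolding crest_def by simp

lemma wave_quad_pos:
  assumes "0 < k" "k < c/4" "u < crest c k"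
  shows "wave_quad c k u > 0"
proof -
  have "u - (c - k + sqrt (c*k)) < 0" using assms less_sqrt_mult[of k c] unfolding crest_def by simp
  then show ?thesis
    using assms wave_quad_factor[of c k u] by (simp add: mult_neg_neg)
qed

lemma wave_quad_nonneg:
  assumes "0 < k" "k < c/4" "u \<le> crest c k"
  shows "wave_quad c k u \<ge> 0"
proof -
  have "u - (c - k + sqrt (c*k)) \<le> 0" using assms less_sqrt_mult[of k c] unfolding crest_def by simp
  then show ?thesis
    using assms wave_quad_factor[of c k u] by (simp add: mult_nonpos_nonpos)
qed

lemma wave_quad_zero_imp_crest:
  assumes "0 < k" "k < c/4" "u < c" "wave_quad c k u = 0"
  shows "u = crest c k"
proof -
  have "k < sqrt (c*k)" using assms less_sqrt_mult[of k c] by simp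
  then have "u - (c - k + sqrt (c*k)) \<noteq> 0" using assms by simp
  then show ?thesis using assms wave_quad_factor[of c k u] by simp
qed

lemma wave_quad_le:
  assumes "0 < k" "k < c/4" "k \<le> u" "u \<le> crest c k"
  shows "wave_quad c k u \<le> (c-k)*(c-4*k)"
proof -
  have "0 < sqrt (c*k)" using assms by simp
  then have "u - k \<le> 2*(c - 2*k)" using assms unfolding crest_def by (smt (verit))
  then have "(u - k) * (u - k - 2*(c - 2*k)) \<le> 0" using assms by (intro mult_nonneg_nonpos) auto
  then show ?thesis unfolding wave_quad_def by (simp add: power2_eq_square algebra_simps)
qed

section \<open>The charge in closed form\<close>

definition Q_density :: "real \<Rightarrow> real \<Rightarrow> real \<Rightarrow> real" where
  "Q_density c k u = 3 * ((c - k) / (c - u)) - ((c - k) / (c - u)) ^ 3 - 2"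

lemma Q_density_factor:
  assumes "u \<noteq> c"
  shows "Q_density c k u = - (((u-k)/(c-u))^2) * ((c-k)/(c-u) + 2)"
proof -
  have "(c-k)/(c-u) = (u-k)/(c-u) + 1" using assms by (simp add: field_simps)
  then show ?thesis unfolding Q_density_def by algebra
qed

lemma Q_density_nonpos:
  assumes "u < c" "k < c"
  shows "Q_density c k u \<le> 0"
  using assms by (simp add: Q_density_factor)

text \<open>A primitive of Q_density u / |phi'|, where |phi'| = (u - k) sqrt (wave_quad c k u) / (c - u)
  by the phase-plane relation.\<close>
definition Q_primitive :: "real \<Rightarrow> real \<Rightarrow> real \<Rightarrow> real" where
  "Q_primitive c k u = (c-k) * sqrt (wave_quad c k u) / (k * (c-u))
     - 2 * ln (sqrt (wave_quad c k u) + c - u - k)"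

lemma Q_primitive_has_derivative:
  assumes "0 < k" "k < c/4" "u < crest c k"
  shows "(Q_primitive c k has_real_derivative
           - (u-k) * ((c-k)/(c-u) + 2) / ((c-u) * sqrt (wave_quad c k u))) (at u)"
proof -
  define s where "s = sqrt (wave_quad c k u)"
  have q: "wave_quad c k u > 0" using wave_quad_pos assms by blast
  then have s: "s > 0" "s^2 = (u-k)^2 - 2*(c-2*k)*(u-k) + (c-k)*(c-4*k)"
    unfolding s_def wave_quad_def by auto
  have "u < c" using crest_lt[OF assms(1,2)] assms(3) by linarith
  have l: "s + c - u - k > 0"
    using s(1) assms less_sqrt_mult[of k c] unfolding crest_def by linarith
  have dq: "(wave_quad c k has_real_derivative 2 * (u - c + k)) (at u)"
    unfolding wave_quad_def[abs_def] by (auto intro!: derivative_eq_intros simp: algebra_simps)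
  have "(Q_primitive c k has_real_derivative
           - (u-k) * ((c-k)/(c-u) + 2) / ((c-u) * s)) (at u)"
    unfolding Q_primitive_def using q l \<open>u < c\<close> assms
    apply (auto intro!: derivative_eq_intros dq simp: s_def[symmetric])
    using s(1) apply (simp add: divide_simps)
    using s(2) by algebra
  then show ?thesis unfolding s_def .
qed

lemma isCont_Q_primitive:
  assumes "0 < k" "k < c/4" "u \<le> crest c k"
  shows "isCont (Q_primitive c k) u"
proof -
  have "sqrt (wave_quad c k u) \<ge> 0" using wave_quad_nonneg assms by simp
  moreover have "c - u - k > 0"
    using assms less_sqrt_mult[of k c] unfolding crest_def by auto
  ultimately have "sqrt (wave_quad c k u) + c - u - k > 0" "u \<noteq> c" using assms(1) by linarith+
  moreover have "isCont (wave_quad c k) u"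
    unfolding wave_quad_def[abs_def] by (intro continuous_intros)
  ultimately show ?thesis
    unfolding Q_primitive_def using assms by (intro continuous_intros) auto
qed

definition Q_closed_form :: "real \<Rightarrow> real \<Rightarrow> real" where
  "Q_closed_form c k = 4 * ln (sqrt ((c-k)*(c-4*k)) + c - 2*k) - 2 * ln c - 2 * ln k
     - 2 * sqrt ((c-k)*(c-4*k)) / k"

lemma Q_closed_form_eq_primitive:
  assumes "0 < k" "k < c/4"
  shows "Q_closed_form c k = 2 * (Q_primitive c k (crest c k) - Q_primitive c k k)"
proof -
  define r where "r = sqrt ((c-k)*(c-4*k))"
  have "wave_quad c k (crest c k) = 0" using assms wave_quad_factor[of c k] by simp
  then have top: "Q_primitive c k (crest c k) = - ln (c * k)"
    using assms by (simp add: Q_primitive_def crest_def ln_sqrt)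
  have bottom: "Q_primitive c k k = r / k - 2 * ln (r + c - 2*k)"
    using assms by (simp add: Q_primitive_def wave_quad_def r_def)
  show ?thesis
    unfolding top bottom Q_closed_form_def r_def[symmetric]
    using assms ln_mult[of c k] by simp
qed

lemma Q_closed_form_has_derivative:
  assumes "0 < k" "k < c/4"
  shows "(Q_closed_form c has_real_derivative (c-4*k)*(2*c+k) / (sqrt ((c-k)*(c-4*k)) * k^2)) (at k)"
proof -
  define r where "r = sqrt ((c-k)*(c-4*k))"
  have pos: "(c-k)*(c-4*k) > 0" using assms by (intro mult_pos_pos) auto
  then have r: "r > 0" "r^2 = (c-k)*(c-4*k)" unfolding r_def by auto
  have w: "r + c - 2*k \<noteq> 0" using r assms by linarith
  have "(Q_closed_form c has_real_derivative (c-4*k)*(2*c+k) / (r * k^2)) (at k)"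
    unfolding Q_closed_form_def r_def using assms w r(1)
    apply (auto intro!: derivative_eq_intros simp: r_def[symmetric])
    using pos apply linarith+
    apply (simp add: divide_simps)
    using r(2) by algebra
  then show ?thesis unfolding r_def .
qed

lemma Q_closed_form_strict_mono:
  assumes "0 < k1" "k1 < k2" "k2 < c/4"
  shows "Q_closed_form c k1 < Q_closed_form c k2"
proof (rule DERIV_pos_imp_increasing[OF \<open>k1 < k2\<close>])
  fix k assume k: "k1 \<le> k" "k \<le> k2"
  have "(c-k)*(c-4*k) > 0" using k assms by (intro mult_pos_pos) auto
  then have "(c-4*k)*(2*c+k) / (sqrt ((c-k)*(c-4*k)) * k^2) > 0"
    using k assms by (intro divide_pos_pos mult_pos_pos) auto
  moreover have "(Q_closed_form c has_real_derivative (c-4*k)*(2*c+k) / (sqrt ((c-k)*(c-4*k)) * k^2)) (at k)"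
    using k assms by (intro Q_closed_form_has_derivative) auto
  ultimately show "\<exists>y. (Q_closed_form c has_real_derivative y) (at k) \<and> y > 0"
    by blast
qed

section \<open>Solitary wave profiles\<close>

lemma smooth_real_has_derivative:
  assumes "smooth_real f"
  shows "((deriv ^^ n) f has_real_derivative (deriv ^^ Suc n) f x) (at x)"
  using assms unfolding smooth_real_def by (simp add: DERIV_deriv_iff_real_differentiable)

locale solitary_wave =
  fixes c k :: real and phi :: "real \<Rightarrow> real"
  assumes k_pos: "0 < k" and k_less: "k < c / 4" and profile: "solitary_profile c k phi"
begin

definition "phi' = deriv phi"
definition "phi'' = deriv phi'"
definition "phi''' = deriv phi''"

lemma phi_limits: "(phi \<longlongrightarrow> k) at_top" "(phi \<longlongrightarrow> k) at_bot"
  and phi_less_c: "phi x < c" and phi_nonconst: "\<exists>x. phi x \<noteq> k"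
  using profile unfolding solitary_profile_def by auto

lemma phi_has_derivative: "(phi has_real_derivative phi' x) (at x)"
  and phi'_has_derivative: "(phi' has_real_derivative phi'' x) (at x)"
  and phi''_has_derivative: "(phi'' has_real_derivative phi''' x) (at x)"
  using profile smooth_real_has_derivative[of phi _ x]
  unfolding solitary_profile_def phi'_def phi''_def phi'''_def
  by (metis funpow_0 funpow_simps_right(2) o_apply)+

lemma wave_ode: "- c * phi' x + c * phi''' x + 4 * phi x * phi' x = 3 * phi' x * phi'' x + phi x * phi''' x"
  using profile unfolding solitary_profile_def tw_ode_def phi'_def phi''_def phi'''_def
  by (simp add: numeral_2_eq_2 numeral_3_eq_3)

lemma isCont_phi: "isCont phi x"
  using phi_has_derivative by (rule DERIV_isCont)

definition "E1 = (c - phi 0) * phi'' 0 - (phi' 0)^2 - c * phi 0 + 2 * (phi 0)^2"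

lemma first_integral: "(c - phi x) * phi'' x - (phi' x)^2 - c * phi x + 2 * (phi x)^2 = E1"
proof -
  let ?E = "\<lambda>x. (c - phi x) * phi'' x - (phi' x)^2 - c * phi x + 2 * (phi x)^2"
  have "(?E has_real_derivative 0) (at y)" for y
    using wave_ode[of y]
    by (auto intro!: derivative_eq_intros phi_has_derivative phi'_has_derivative phi''_has_derivative
        simp: algebra_simps power2_eq_square)
  then have "?E x = ?E 0" by (intro DERIV_isconst_all) auto
  then show ?thesis unfolding E1_def .
qed

text \<open>P' u = 2 (c - u) (E1 + c u - 2 u^2), so multiplying the first integral by
  2 (c - phi) phi' integrates once more.\<close>
definition "P u = c^2 * u^2 - 2*c*u^3 + u^4 + 2*c*E1*u - E1*u^2"

definition "E2 = (c - phi 0)^2 * (phi' 0)^2 - P (phi 0)"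

lemma second_integral: "(c - phi x)^2 * (phi' x)^2 - P (phi x) = E2"
proof -
  let ?E = "\<lambda>x. (c - phi x)^2 * (phi' x)^2 - P (phi x)"
  have "(?E has_real_derivative 0) (at y)" for y
  proof -
    have "(c - phi y) * phi'' y = E1 + (phi' y)^2 + c * phi y - 2 * (phi y)^2"
      using first_integral[of y] by simp
    then show ?thesis unfolding P_def
      by (auto intro!: derivative_eq_intros phi_has_derivative phi'_has_derivative) algebra
  qed
  then have "?E x = ?E 0" by (intro DERIV_isconst_all) auto
  then show ?thesis unfolding E2_def .
qed

lemma phi'_tendsto_zero: "(phi' \<longlongrightarrow> 0) at_top" and P_k: "P k + E2 = 0"
proof -
  have "(c - k)^2 > 0" using k_pos k_less by simp
  have "(phi' x)^2 = (P (phi x) + E2) / (c - phi x)^2" for x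
    using second_integral[of x] phi_less_c[of x] by (simp add: field_simps)
  moreover have "((\<lambda>x. (P (phi x) + E2) / (c - phi x)^2) \<longlongrightarrow> (P k + E2) / (c - k)^2) at_top"
    unfolding P_def using \<open>(c - k)^2 > 0\<close> by (intro tendsto_intros phi_limits) auto
  ultimately have "((\<lambda>x. (phi' x)^2) \<longlongrightarrow> (P k + E2) / (c - k)^2) at_top"
    by simp
  from tendsto_real_sqrt[OF this]
  have "((\<lambda>x. \<bar>phi' x\<bar>) \<longlongrightarrow> sqrt ((P k + E2) / (c - k)^2)) at_top"
    by simp
  moreover from this have "sqrt ((P k + E2) / (c - k)^2) = 0"
    by (rule abs_deriv_limit_zero_at_top[OF phi_limits(1) phi_has_derivative])
  ultimately show "(phi' \<longlongrightarrow> 0) at_top" "P k + E2 = 0"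
    using \<open>(c - k)^2 > 0\<close> by (simp_all add: tendsto_rabs_zero_iff)
qed

lemma E1_eq: "E1 = 2 * k^2 - c * k"
proof -
  have "phi'' x = (E1 + (phi' x)^2 + c * phi x - 2 * (phi x)^2) / (c - phi x)" for x
    using first_integral[of x] phi_less_c[of x] by (simp add: field_simps)
  moreover have "((\<lambda>x. (E1 + (phi' x)^2 + c * phi x - 2 * (phi x)^2) / (c - phi x))
      \<longlongrightarrow> (E1 + c * k - 2 * k^2) / (c - k)) at_top"
    using k_pos k_less by (auto intro!: tendsto_eq_intros phi_limits phi'_tendsto_zero)
  ultimately have "((\<lambda>x. \<bar>phi'' x\<bar>) \<longlongrightarrow> \<bar>(E1 + c * k - 2 * k^2) / (c - k)\<bar>) at_top"
    using tendsto_rabs by fastforce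
  from abs_deriv_limit_zero_at_top[OF phi'_tendsto_zero phi'_has_derivative this]
  show ?thesis using k_pos k_less by simp
qed

lemma phase_relation: "(c - phi x)^2 * (phi' x)^2 = (phi x - k)^2 * wave_quad c k (phi x)"
proof -
  have "(c - phi x)^2 * (phi' x)^2 = P (phi x) - P k" using second_integral[of x] P_k by simp
  also have "\<dots> = (phi x - k)^2 * wave_quad c k (phi x)"
    unfolding P_def wave_quad_def E1_eq by algebra
  finally show ?thesis .
qed

lemma phi_ge_k: "k \<le> phi x"
proof (rule ccontr)
  assume "\<not> k \<le> phi x"
  then have "phi x < k" by simp
  then obtain m where m: "\<And>y. phi m \<le> phi y"
    using attains_min_if_below_limits[OF isCont_phi phi_limits] by blast
  have "phi' m = 0" using DERIV_local_min[OF phi_has_derivative zero_less_one] m by blast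
  moreover have "phi m < k" using m[of x] \<open>phi x < k\<close> by simp
  moreover have "wave_quad c k (phi m) > 0"
    using calculation(2) crest_gt[OF k_pos k_less] wave_quad_pos[OF k_pos k_less] by simp
  ultimately show False using phase_relation[of m] by simp
qed

definition "M = (SOME M. \<forall>x. phi x \<le> phi M)"

lemma phi_le_phi_M: "phi x \<le> phi M" and phi_M_gt_k: "k < phi M"
proof -
  obtain x0 where "phi x0 > k" using phi_nonconst phi_ge_k by (metis order_less_le)
  then have "\<exists>M. \<forall>x. phi x \<le> phi M"
    using attains_max_if_above_limits[OF isCont_phi phi_limits] by blast
  then have "\<forall>x. phi x \<le> phi M" unfolding M_def by (rule someI_ex)
  then show "phi x \<le> phi M" "k < phi M" using \<open>phi x0 > k\<close> by (auto intro: less_le_trans)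
qed

lemma phi'_M: "phi' M = 0"
  using DERIV_local_max[OF phi_has_derivative zero_less_one] phi_le_phi_M by blast

lemma phi_M: "phi M = crest c k"
proof (rule wave_quad_zero_imp_crest[OF k_pos k_less phi_less_c])
  show "wave_quad c k (phi M) = 0" using phase_relation[of M] phi'_M phi_M_gt_k by simp
qed

lemma phi_le_crest: "phi x \<le> crest c k"
  using phi_le_phi_M phi_M by simp

lemma phi'_sq_le: "(phi' x)^2 \<le> (c-k)*(c-4*k) / k^2 * (phi x - k)^2"
proof -
  have "k \<le> c - phi x"
    using phi_le_crest[of x] less_sqrt_mult[of k c] k_pos k_less unfolding crest_def by simp
  then have "k^2 * (phi' x)^2 \<le> (c - phi x)^2 * (phi' x)^2"
    using k_pos by (intro mult_right_mono power_mono) auto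
  also have "\<dots> \<le> (phi x - k)^2 * ((c-k)*(c-4*k))"
    unfolding phase_relation using wave_quad_le[OF k_pos k_less phi_ge_k phi_le_crest]
    by (intro mult_left_mono) auto
  finally show ?thesis using k_pos by (simp add: field_simps)
qed

text \<open>The profile cannot reach the level k in finite time: (phi - k)^2 satisfies a linear
  differential inequality, so it cannot vanish at one point without vanishing identically.\<close>
lemma phi_gt_k: "k < phi x"
proof (rule ccontr)
  assume "\<not> k < phi x"
  then have "(phi x - k)^2 = 0" using phi_ge_k[of x] by simp
  define K where "K = 1 + (c-k)*(c-4*k) / k^2"
  have bound: "\<bar>2 * (phi y - k) * phi' y\<bar> \<le> K * (phi y - k)^2" for y
  proof -
    have "\<bar>2 * (phi y - k) * phi' y\<bar> = 2 * \<bar>phi y - k\<bar> * \<bar>phi' y\<bar>"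
      by (simp only: abs_mult abs_numeral)
    also have "\<dots> \<le> (phi y - k)^2 + (phi' y)^2"
      using sum_squares_bound[of "\<bar>phi y - k\<bar>" "\<bar>phi' y\<bar>"] by simp
    also have "\<dots> \<le> K * (phi y - k)^2"
      using phi'_sq_le[of y] unfolding K_def by (simp add: algebra_simps)
    finally show ?thesis .
  qed
  have "(phi y - k)^2 = 0" for y
  proof (rule vanishes_if_abs_deriv_le[where \<psi>="\<lambda>y. (phi y - k)^2" and a=x])
    show "((\<lambda>y. (phi y - k)^2) has_real_derivative 2 * (phi z - k) * phi' z) (at z)" for z
      by (auto intro!: derivative_eq_intros phi_has_derivative)
  qed (use bound \<open>(phi x - k)^2 = 0\<close> in auto)
  then show False using phi_nonconst by simp
qed

lemma phi'_zero_imp_crest: "phi' x = 0 \<Longrightarrow> phi x = crest c k"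
  using phase_relation[of x] phi_gt_k[of x]
  by (intro wave_quad_zero_imp_crest[OF k_pos k_less phi_less_c]) simp

lemma phi''_M: "phi'' M < 0"
proof -
  have "sqrt (c*k) < sqrt ((c/2)^2)"
    using k_pos k_less by (intro real_sqrt_less_mono) (simp add: power2_eq_square)
  then have "c - 2 * crest c k - 2*k < 0" using k_pos k_less unfolding crest_def by simp
  then have "(crest c k - k) * (c - 2 * crest c k - 2*k) < 0"
    using crest_gt[OF k_pos k_less] by (simp add: mult_pos_neg)
  moreover have "(c - phi M) * phi'' M = (crest c k - k) * (c - 2 * crest c k - 2*k)"
    using first_integral[of M] phi'_M phi_M unfolding E1_eq by (simp add: algebra_simps power2_eq_square)
  ultimately have "(c - phi M) * phi'' M < 0" by simp
  then show ?thesis using phi_less_c[of M] by (simp add: mult_less_0_iff)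
qed

lemma phi_right_of_M: "M < x \<Longrightarrow> phi' x < 0 \<and> phi x < crest c k"
  using deriv_neg_right_of_max[OF phi_has_derivative phi'_has_derivative phi_le_phi_M _ phi''_M]
    phi'_zero_imp_crest phi_M by simp

lemma phi_left_of_M: "x < M \<Longrightarrow> 0 < phi' x \<and> phi x < crest c k"
proof -
  assume "x < M"
  have "((\<lambda>x. phi (- x)) has_real_derivative - phi' (- x)) (at x)" for x
    using DERIV_chain2[OF phi_has_derivative DERIV_minus[OF DERIV_ident]] by simp
  moreover have "((\<lambda>x. - phi' (- x)) has_real_derivative phi'' (- x)) (at x)" for x
    using DERIV_minus[OF DERIV_chain2[OF phi'_has_derivative DERIV_minus[OF DERIV_ident]]] by simp
  ultimately have "- phi' (- (- x)) < 0 \<and> phi (- (- x)) < phi (- (- M))"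
    using deriv_neg_right_of_max[of "\<lambda>x. phi (- x)" "\<lambda>x. - phi' (- x)" "\<lambda>x. phi'' (- x)" "- M" "- x"]
      phi_le_phi_M phi'_zero_imp_crest phi_M phi''_M \<open>x < M\<close> by simp
  then show ?thesis using phi_M by simp
qed

lemma abs_phi'_eq: "\<bar>phi' x\<bar> * (c - phi x) = (phi x - k) * sqrt (wave_quad c k (phi x))"
proof (rule power2_eq_imp_eq)
  have "wave_quad c k (phi x) \<ge> 0" using wave_quad_nonneg[OF k_pos k_less phi_le_crest] .
  then show "(\<bar>phi' x\<bar> * (c - phi x))^2 = ((phi x - k) * sqrt (wave_quad c k (phi x)))^2"
    using phase_relation[of x] by (simp add: power_mult_distrib mult.commute)
  show "0 \<le> \<bar>phi' x\<bar> * (c - phi x)" "0 \<le> (phi x - k) * sqrt (wave_quad c k (phi x))"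
    using phi_less_c[of x] phi_ge_k[of x] \<open>wave_quad c k (phi x) \<ge> 0\<close> by simp_all
qed

lemma Q_primitive_phi_has_derivative:
  assumes "phi x < crest c k"
  shows "((\<lambda>x. Q_primitive c k (phi x)) has_real_derivative sgn (phi' x) * Q_density c k (phi x)) (at x)"
proof -
  define s where "s = sqrt (wave_quad c k (phi x))"
  define v where "v = c - phi x"
  have "s > 0" using wave_quad_pos[OF k_pos k_less assms] unfolding s_def by simp
  have "v > 0" using phi_less_c[of x] unfolding v_def by simp
  define \<sigma> where "\<sigma> = sgn (phi' x)"
  have d: "phi' x = \<sigma> * ((phi x - k) * s / v)"
    using abs_phi'_eq[of x] \<open>v > 0\<close> unfolding s_def[symmetric] v_def[symmetric] \<sigma>_def
    by (metis nonzero_eq_divide_eq order_less_irrefl sgn_mult_abs)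
  have q: "Q_density c k (phi x) = - (((phi x - k) / v)^2) * ((c-k)/v + 2)"
    using Q_density_factor \<open>v > 0\<close> unfolding v_def by simp
  have "- (phi x - k) * ((c-k)/v + 2) / (v * s) * phi' x = \<sigma> * Q_density c k (phi x)"
    unfolding d q using \<open>s > 0\<close> \<open>v > 0\<close> by (simp add: field_simps power2_eq_square)
  moreover have "((\<lambda>x. Q_primitive c k (phi x)) has_real_derivative
      - (phi x - k) * ((c-k)/v + 2) / (v * s) * phi' x) (at x)"
    using DERIV_chain2[OF Q_primitive_has_derivative[OF k_pos k_less assms] phi_has_derivative]
    unfolding s_def v_def .
  ultimately show ?thesis unfolding \<sigma>_def by simp
qed

lemma Q_density_phi_nonpos: "Q_density c k (phi x) \<le> 0"
  using Q_density_nonpos[OF phi_less_c] k_pos k_less by simp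

lemma isCont_Q_density_phi: "isCont (\<lambda>x. Q_density c k (phi x)) x"
  using phi_less_c[of x] unfolding Q_density_def by (auto intro!: continuous_intros isCont_phi)

lemma isCont_Q_primitive_phi: "isCont (\<lambda>x. Q_primitive c k (phi x)) x"
  using isCont_Q_primitive[OF k_pos k_less phi_le_crest] by (rule isCont_o2[OF isCont_phi])

lemma Q_primitive_phi_tendsto:
  "((\<lambda>x. Q_primitive c k (phi x)) \<longlongrightarrow> Q_primitive c k k) at_top"
  "((\<lambda>x. Q_primitive c k (phi x)) \<longlongrightarrow> Q_primitive c k k) at_bot"
  using crest_gt[OF k_pos k_less]
  by (auto intro!: isCont_tendsto_compose[OF isCont_Q_primitive[OF k_pos k_less]] phi_limits)

lemma integral_right_of_M:
  "set_integrable lborel {M<..} (\<lambda>x. - Q_density c k (phi x))"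
  "(LINT x:{M<..}|lborel. - Q_density c k (phi x)) = Q_primitive c k k - Q_primitive c k (crest c k)"
proof -
  have "((\<lambda>x. Q_primitive c k (phi x)) has_real_derivative - Q_density c k (phi x)) (at x)"
    if "M < x" for x
    using Q_primitive_phi_has_derivative[of x] phi_right_of_M[OF that] by simp
  then show "set_integrable lborel {M<..} (\<lambda>x. - Q_density c k (phi x))"
    "(LINT x:{M<..}|lborel. - Q_density c k (phi x)) = Q_primitive c k k - Q_primitive c k (crest c k)"
    using integral_Ioi_FTC_nonneg[where F="\<lambda>x. Q_primitive c k (phi x)" and a=M]
      isCont_Q_density_phi Q_density_phi_nonpos isCont_Q_primitive_phi Q_primitive_phi_tendsto phi_M
    by auto
qed

lemma integral_left_of_M:
  "set_integrable lborel {..<M} (\<lambda>x. - Q_density c k (phi x))"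
  "(LINT x:{..<M}|lborel. - Q_density c k (phi x)) = Q_primitive c k k - Q_primitive c k (crest c k)"
proof -
  have "((\<lambda>x. - Q_primitive c k (phi x)) has_real_derivative - Q_density c k (phi x)) (at x)"
    if "x < M" for x
    using Q_primitive_phi_has_derivative[of x] phi_left_of_M[OF that] by (auto intro: DERIV_minus)
  moreover have "((\<lambda>x. - Q_primitive c k (phi x)) \<longlongrightarrow> - Q_primitive c k k) at_bot"
    using Q_primitive_phi_tendsto(2) by (rule tendsto_minus)
  ultimately show "set_integrable lborel {..<M} (\<lambda>x. - Q_density c k (phi x))"
    "(LINT x:{..<M}|lborel. - Q_density c k (phi x)) = Q_primitive c k k - Q_primitive c k (crest c k)"
    using integral_Iio_FTC_nonneg[where F="\<lambda>x. - Q_primitive c k (phi x)" and a=M]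
      isCont_Q_density_phi Q_density_phi_nonpos isCont_Q_primitive_phi phi_M
    by auto
qed

lemma Qfun_eq_closed_form: "Qfun c k phi = Q_closed_form c k"
proof -
  have "(\<lambda>x. - Q_density c k (phi x)) \<in> borel_measurable borel"
    using isCont_Q_density_phi
    by (intro borel_measurable_continuous_onI continuous_at_imp_continuous_on) (auto intro: isCont_minus)
  then have "(LINT x|lborel. - Q_density c k (phi x))
      = 2 * (Q_primitive c k k - Q_primitive c k (crest c k))"
    using integral_lborel_split[OF _ integral_left_of_M(1) integral_right_of_M(1)]
      integral_left_of_M(2) integral_right_of_M(2) by simp
  then show ?thesis
    using Q_closed_form_eq_primitive[OF k_pos k_less]
    unfolding Qfun_def Q_density_def[symmetric] Bochner_Integration.integral_minus by simp
qed

end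

theorem lemma5p2:
  fixes c k1 k2 :: real and phi1 phi2 :: "real \<Rightarrow> real"
  assumes "c > 0"
    and "0 < k1" and "k1 < k2" and "k2 < c / 4"
    and "solitary_profile c k1 phi1" and "solitary_profile c k2 phi2"
  shows "Qfun c k1 phi1 < Qfun c k2 phi2"
proof -
  interpret wave1: solitary_wave c k1 phi1 by unfold_locales (use assms in auto)
  interpret wave2: solitary_wave c k2 phi2 by unfold_locales (use assms in auto)
  show ?thesis
    using wave1.Qfun_eq_closed_form wave2.Qfun_eq_closed_form Q_closed_form_strict_mono assms
    by simp
qed

end
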